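(* Let $n\ge3$, let $g$ be the constant contravariant metric on $\mathbb R^n$ with $g^{ij}=\delta^{i,n+1-j}$, and for $k=1,\dots,n-2$ let $X_{(k)}=\sum_{i=1}^{n-k}(n-k+1-2i)\,u^{i+k}\partial_{u^i}$. Then for all $k$ and all $\alpha\ge0$: (1) $\mathcal L_{X_{(k)}}g=0$; (2) $\mathcal L_{X_{(k)}}\mu^{(n;\alpha)}=p_{[n,k,\alpha]}\,\mu^{(n;\alpha+k)}$; (3) for every $m\ge1$, $\mathcal L^m_{X_{(k)}}\mu^{(n;\alpha)}=\Big(\prod_{s=0}^{m-1}(p_{[n,k,\alpha]}-2ks)\Big)\mu^{(n;\alpha+mk)}$, where $p_{[n,k,\alpha]}=3k+1-n-2\alpha$.
   Context: $\mathcal L$ denotes the Lie derivative (acting on symmetric bivectors). For integers $n\ge1$, $k\ge0$ the symmetric bivector $\mu^{(n;k)}$ has components $\mu^{(n;k)ij}=[3(i+j)-2(n+2-k)]\,u^{i+j-1+k}$, $i,j=1,\dots,n$, with the convention $u^\beta\equiv0$ for $\beta>n$ (so $\mu^{(n;k)}=0$ for $k>n-2$). *)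

theory Defs
  imports "HOL-Analysis.Analysis"
begin

text \<open>Points of R^n are functions u :: nat => real; only coordinates u 1, ..., u n are used.
  Fields: scalar (point => real), vector (point => index => real),
  bivector (point => index => index => real); indices range over 1..n.\<close>

type_synonym point = "nat \<Rightarrow> real"
type_synonym vfield = "point \<Rightarrow> nat \<Rightarrow> real"
type_synonym bfield = "point \<Rightarrow> nat \<Rightarrow> nat \<Rightarrow> real"

definition pd :: "nat \<Rightarrow> (point \<Rightarrow> real) \<Rightarrow> point \<Rightarrow> real" where
  "pd s f u = deriv (\<lambda>t. f (u(s := t))) (u s)"

definition lie :: "nat \<Rightarrow> vfield \<Rightarrow> bfield \<Rightarrow> bfield" where
  "lie n X P u i j =
     (\<Sum>s=1..n. X u s * pd s (\<lambda>v. P v i j) u)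
     - (\<Sum>s=1..n. P u s j * pd s (\<lambda>v. X v i) u)
     - (\<Sum>s=1..n. P u i s * pd s (\<lambda>v. X v j) u)"

definition coord :: "nat \<Rightarrow> nat \<Rightarrow> point \<Rightarrow> real" where
  "coord n \<beta> u = (if \<beta> \<le> n then u \<beta> else 0)"

definition gmet :: "nat \<Rightarrow> bfield" where
  "gmet n u i j = (if i + j = n + 1 then 1 else 0)"

definition mu :: "nat \<Rightarrow> nat \<Rightarrow> bfield" where
  "mu n k u i j = (3 * (real i + real j) - 2 * (real n + 2 - real k)) * coord n (i + j - 1 + k) u"

definition Xk :: "nat \<Rightarrow> nat \<Rightarrow> vfield" where
  "Xk n k u i = (if 1 \<le> i \<and> i \<le> n - k
                 then (real n - real k + 1 - 2 * real i) * coord n (i + k) u else 0)"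

definition pcoef :: "nat \<Rightarrow> nat \<Rightarrow> nat \<Rightarrow> real" where
  "pcoef n k \<alpha> = 3 * real k + 1 - real n - 2 * real \<alpha>"

end

theory Submission
  imports Defs
begin

text \<open>All fields involved are linear in the coordinates: \<open>X_(k)^i\<close> is a multiple of \<open>u^(i+k)\<close>
  and \<open>mu^(n;a)ij\<close> a multiple of \<open>u^(i+j-1+a)\<close>. So each of the three sums in the Lie
  derivative collapses to a single term, all proportional to \<open>u^(i+j-1+a+k)\<close>, and comparing
  coefficients gives the factor \<open>p[n,k,a]\<close>; for the constant metric only the two transport
  terms survive, and they cancel on the antidiagonal \<open>i + j = n + 1\<close>. Since
  \<open>p[n,k,a+k] = p[n,k,a] - 2k\<close>, iteration produces the product formula.\<close>

lemma pd_scaled_coord: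
  "pd s (\<lambda>v. a * coord n b v) u = (if b \<le> n \<and> s = b then a else 0)"
proof (cases "b \<le> n \<and> s = b")
  case True
  have "deriv (\<lambda>t. a * t) x = a" for x
    by (rule DERIV_imp_deriv) (rule DERIV_cmult_Id)
  with True show ?thesis unfolding pd_def coord_def by simp
next
  case False
  then have "(\<lambda>t. a * coord n b (u(s := t))) = (\<lambda>t. a * coord n b u)"
    unfolding coord_def by auto
  with False show ?thesis unfolding pd_def by auto
qed

lemma pd_const: "pd s (\<lambda>v. a) u = 0"
  unfolding pd_def by simp

lemma sum_mult_if_eq:
  "(\<Sum>s=1..(n::nat). f s * (if P \<and> s = b then a else 0)) =
   (if P \<and> 1 \<le> b \<and> b \<le> n then f b * a else (0::real))"
proof -
  have "(\<Sum>s=1..n. f s * (if P \<and> s = b then a else 0)) =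
        (\<Sum>s\<in>{1..n}. if s = b then (if P then f b * a else 0) else 0)"
    by (rule sum.cong) auto
  then show ?thesis by simp
qed

text \<open>The range condition \<open>i \<le> n - k\<close> of \<open>Xk\<close> is recast as \<open>i + k \<le> n\<close> to avoid truncated
  subtraction.\<close>

lemma Xk_eq_scaled_coord:
  "Xk n k v i = (if 1 \<le> i \<and> i + k \<le> n then real n - real k + 1 - 2 * real i else 0) * coord n (i + k) v"
  unfolding Xk_def by (auto simp: coord_def)

lemma pd_Xk:
  "pd s (\<lambda>v. Xk n k v i) u =
     (if (1 \<le> i \<and> i + k \<le> n) \<and> s = i + k then real n - real k + 1 - 2 * real i else 0)"
  unfolding Xk_eq_scaled_coord pd_scaled_coord by auto

lemma scaled_mu_eq_scaled_coord:
  "c * mu n g v i j = (c * (3 * (real i + real j) - 2 * (real n + 2 - real g))) * coord n (i + j - 1 + g) v"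
  unfolding mu_def by simp

lemma lie_Xk_gmet:
  assumes "i \<in> {1..n}" "j \<in> {1..n}"
  shows "lie n (Xk n k) (gmet n) u i j = 0"
proof -
  have "pd s (\<lambda>v. gmet n v i j) u = 0" for s
    unfolding gmet_def by (rule pd_const)
  then show ?thesis
    unfolding lie_def pd_Xk sum_mult_if_eq using assms by (simp add: gmet_def)
qed

lemma lie_Xk_scaled_mu:
  assumes "i \<in> {1..n}" "j \<in> {1..n}"
  shows "lie n (Xk n k) (\<lambda>u i j. c * mu n g u i j) u i j = c * pcoef n k g * mu n (g + k) u i j"
proof -
  obtain i' j' where ij: "i = Suc i'" "j = Suc j'"
    using assms by (metis atLeastAtMost_iff not0_implies_Suc not_one_le_zero)
  show ?thesis
    unfolding lie_def scaled_mu_eq_scaled_coord pd_scaled_coord pd_Xk sum_mult_if_eq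
      Xk_eq_scaled_coord
    using assms unfolding ij by (simp add: coord_def pcoef_def mu_def algebra_simps)
qed

lemma lie_cong:
  assumes "\<And>v i j. i \<in> {1..n} \<Longrightarrow> j \<in> {1..n} \<Longrightarrow> P v i j = Q v i j"
    and "i \<in> {1..n}" "j \<in> {1..n}"
  shows "lie n X P u i j = lie n X Q u i j"
proof -
  have "(\<lambda>v. P v i j) = (\<lambda>v. Q v i j)"
    using assms by auto
  moreover have "(\<Sum>s=1..n. P u s j * pd s (\<lambda>v. X v i) u) = (\<Sum>s=1..n. Q u s j * pd s (\<lambda>v. X v i) u)"
    using assms by (intro sum.cong) auto
  moreover have "(\<Sum>s=1..n. P u i s * pd s (\<lambda>v. X v j) u) = (\<Sum>s=1..n. Q u i s * pd s (\<lambda>v. X v j) u)"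
    using assms by (intro sum.cong) auto
  ultimately show ?thesis
    unfolding lie_def by simp
qed

lemma pcoef_add_mult:
  "pcoef n k (\<alpha> + m * k) = pcoef n k \<alpha> - 2 * real k * real m"
  unfolding pcoef_def by (simp add: algebra_simps)

lemma funpow_lie_Xk_mu:
  assumes "i \<in> {1..n}" "j \<in> {1..n}"
  shows "(lie n (Xk n k) ^^ Suc m) (mu n \<alpha>) u i j
     = (\<Prod>s=0..m. pcoef n k \<alpha> - 2 * real k * real s) * mu n (\<alpha> + Suc m * k) u i j"
  using assms
proof (induction m arbitrary: u i j)
  case 0
  show ?case
    using lie_Xk_scaled_mu[OF 0, where c = 1] by simp
next
  case (Suc m)
  let ?c = "\<Prod>s=0..m. pcoef n k \<alpha> - 2 * real k * real s"
  have "(lie n (Xk n k) ^^ Suc (Suc m)) (mu n \<alpha>) u i j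
      = lie n (Xk n k) ((lie n (Xk n k) ^^ Suc m) (mu n \<alpha>)) u i j"
    by simp
  also have "\<dots> = lie n (Xk n k) (\<lambda>u i j. ?c * mu n (\<alpha> + Suc m * k) u i j) u i j"
    by (rule lie_cong[OF Suc.IH Suc.prems])
  also have "\<dots> = ?c * pcoef n k (\<alpha> + Suc m * k) * mu n (\<alpha> + Suc m * k + k) u i j"
    by (rule lie_Xk_scaled_mu[OF Suc.prems])
  also have "pcoef n k (\<alpha> + Suc m * k) = pcoef n k \<alpha> - 2 * real k * real (Suc m)"
    by (rule pcoef_add_mult)
  also have "\<alpha> + Suc m * k + k = \<alpha> + Suc (Suc m) * k"
    by simp
  finally show ?case
    by (simp add: prod.atLeast0_atMost_Suc)
qed

theorem lemma3:
  fixes n k \<alpha> :: nat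
  assumes "n \<ge> 3" and "1 \<le> k" and "k \<le> n - 2"
  shows "(\<forall>u i j. i \<in> {1..n} \<longrightarrow> j \<in> {1..n} \<longrightarrow> lie n (Xk n k) (gmet n) u i j = 0)
       \<and> (\<forall>u i j. i \<in> {1..n} \<longrightarrow> j \<in> {1..n} \<longrightarrow>
            lie n (Xk n k) (mu n \<alpha>) u i j = pcoef n k \<alpha> * mu n (\<alpha> + k) u i j)
       \<and> (\<forall>m \<ge> 1. \<forall>u i j. i \<in> {1..n} \<longrightarrow> j \<in> {1..n} \<longrightarrow>
            (lie n (Xk n k) ^^ m) (mu n \<alpha>) u i j
              = (\<Prod>s=0..m-1. pcoef n k \<alpha> - 2 * real k * real s) * mu n (\<alpha> + m * k) u i j)"
proof (intro conjI allI impI)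
  fix u i j
  assume ij: "i \<in> {1..n}" "j \<in> {1..n}"
  show "lie n (Xk n k) (gmet n) u i j = 0"
    using lie_Xk_gmet[OF ij] .
  show "lie n (Xk n k) (mu n \<alpha>) u i j = pcoef n k \<alpha> * mu n (\<alpha> + k) u i j"
    using funpow_lie_Xk_mu[OF ij, of 0] by simp
next
  fix m :: nat and u i j
  assume "m \<ge> 1" and ij: "i \<in> {1..n}" "j \<in> {1..n}"
  then obtain m' where "m = Suc m'"
    using not0_implies_Suc by fastforce
  then show "(lie n (Xk n k) ^^ m) (mu n \<alpha>) u i j
      = (\<Prod>s=0..m-1. pcoef n k \<alpha> - 2 * real k * real s) * mu n (\<alpha> + m * k) u i j"
    using funpow_lie_Xk_mu[OF ij, of m'] by simp
qed

end
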